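(* Let $M$ be a finite $\mathbb{Z}[D]$-module. Then \[\frac{|M|\,|M^D|^2}{|M^R|\,|M^\Sigma|^2}=\frac{\hat h^0(D,M)}{\hat h^{-1}(D,M)},\] and consequently \[\mathcal C_\Theta(M)=\left(\frac{\hat h^{-1}(D,M)}{\hat h^0(D,M)}\right)^2=\frac{\hat h^{-1}(\Theta,M)}{\hat h^0(\Theta,M)}.\] If moreover $M\cong M^\vee$ as $\mathbb{Z}[D]$-modules, then $\frac{|M|\,|M^D|^2}{|M^R|\,|M^\Sigma|^2}=\mathcal C_\Theta(M)=1$.
   Context: Let $q>1$ be an odd integer, $D=\langle\rho,\sigma:\rho^q=\sigma^2=1,\ \sigma\rho\sigma^{-1}=\rho^{-1}\rangle$ the dihedral group of order $2q$, $R=\langle\rho\rangle$, $\Sigma=\langle\sigma\rangle$, and $\Theta=1+2D-R-2\Sigma$, i.e. the $D$-Brauer relation $\sum_H n_HH$ with $n_{\{1\}}=1$, $n_D=2$, $n_R=-1$, $n_\Sigma=-2$ and $n_H=0$ for all other subgroups. For a finitely generated $\mathbb{Z}[D]$-module $M$, write $M_{\mathrm{tors}}$ for its $\mathbb{Z}$-torsion subgroup and $M_{\mathrm{tf}}=M/M_{\mathrm{tors}}$; the regulator constant is $\mathcal C_\Theta(M)=\prod_{H\le D}\bigl(|M_{\mathrm{tors}}^H|^{-2}\det(\tfrac{1}{|H|}\langle\cdot,\cdot\rangle|_{(M^H)_{\mathrm{tf}}})\bigr)^{n_H}$, where $\langle\cdot,\cdot\rangle:M\times M\to\mathscr L$ is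 any $D$-invariant $\mathbb{Z}$-bilinear pairing into a field $\mathscr L\supseteq\mathbb{Q}$ non-degenerate on $M_{\mathrm{tf}}$ and the determinant is taken on a $\mathbb{Z}$-basis of $(M^H)_{\mathrm{tf}}$ (independent of the pairing; for finite $M$ it equals $\prod_H|M^H|^{-2n_H}$). For $i\in\mathbb{Z}$ and $H\le D$, $\hat H^i(H,M)$ is Tate cohomology, $\hat h^i(H,M)=|\hat H^i(H,M)|$, $\hat h^i(\Theta,M)=\prod_H\hat h^i(H,M)^{n_H}$. For finite $M$, $M^\vee=\mathrm{Hom}(M,\mathbb{Q}/\mathbb{Z})$ with action $(g\psi)(m)=\psi(g^{-1}m)$. *)

theory Defs
  imports Complex_Main
begin

quotient_type qz = rat / "\<lambda>x y. x - y \<in> \<int>"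
  morphisms rep_qz abs_qz
proof (rule equivpI)
  show "reflp (\<lambda>x y::rat. x - y \<in> \<int>)" by (simp add: reflp_def)
  show "symp (\<lambda>x y::rat. x - y \<in> \<int>)"
    unfolding symp_def by (metis Ints_minus minus_diff_eq)
  show "transp (\<lambda>x y::rat. x - y \<in> \<int>)"
    unfolding transp_def by (metis Ints_add diff_add_cancel add_diff_eq)
qed

instantiation qz :: ab_group_add
begin
lift_definition zero_qz :: qz is "0::rat" .
lift_definition plus_qz :: "qz \<Rightarrow> qz \<Rightarrow> qz" is "(+)"
  by (metis Ints_add add_diff_add)
lift_definition uminus_qz :: "qz \<Rightarrow> qz" is uminus
  by (metis Ints_minus minus_diff_eq minus_diff_minus)
lift_definition minus_qz :: "qz \<Rightarrow> qz \<Rightarrow> qz" is "(-)"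
  by (metis Ints_diff diff_diff_eq2 add_diff_eq diff_add_eq diff_diff_add
      add.commute diff_diff_eq)
instance
  by standard (transfer; simp add: algebra_simps)+
end

text \<open>The element rho^a sigma^b of D is encoded as the pair (a,b), with a < q, b < 2.
  A Z[D]-module structure on a finite abelian group 'm is given by the additive maps
  r (action of rho) and s (action of sigma) satisfying the defining relations of D.\<close>

definition Dgrp :: "nat \<Rightarrow> (nat \<times> nat) set" where
  "Dgrp q = {(a, b). a < q \<and> b < 2}"

definition Rgrp :: "nat \<Rightarrow> (nat \<times> nat) set" where
  "Rgrp q = {(a, b). a < q \<and> b = 0}"

definition Sgrp :: "(nat \<times> nat) set" where
  "Sgrp = {(0, 0), (0, 1)}"

definition Triv :: "(nat \<times> nat) set" where
  "Triv = {(0, 0)}"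

definition dact :: "('m \<Rightarrow> 'm) \<Rightarrow> ('m \<Rightarrow> 'm) \<Rightarrow> nat \<times> nat \<Rightarrow> 'm \<Rightarrow> 'm" where
  "dact r s g x = (r ^^ fst g) ((s ^^ snd g) x)"

definition dinv :: "nat \<Rightarrow> nat \<times> nat \<Rightarrow> nat \<times> nat" where
  "dinv q g = (if snd g = 0 then ((q - fst g) mod q, 0) else (fst g, 1))"

definition is_D_module :: "nat \<Rightarrow> ('m::ab_group_add \<Rightarrow> 'm) \<Rightarrow> ('m \<Rightarrow> 'm) \<Rightarrow> bool" where
  "is_D_module q r s \<longleftrightarrow>
     (\<forall>x y. r (x + y) = r x + r y) \<and> (\<forall>x y. s (x + y) = s x + s y) \<and>
     (\<forall>x. (r ^^ q) x = x) \<and> (\<forall>x. s (s x) = x) \<and>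
     (\<forall>x. s (r (s x)) = (r ^^ (q - 1)) x)"

definition fixedpts :: "('m \<Rightarrow> 'm) \<Rightarrow> ('m \<Rightarrow> 'm) \<Rightarrow> (nat \<times> nat) set \<Rightarrow> 'm set" where
  "fixedpts r s H = {x. \<forall>g\<in>H. dact r s g x = x}"

definition normmap :: "('m::ab_group_add \<Rightarrow> 'm) \<Rightarrow> ('m \<Rightarrow> 'm) \<Rightarrow> (nat \<times> nat) set \<Rightarrow> 'm \<Rightarrow> 'm" where
  "normmap r s H x = (\<Sum>g\<in>H. dact r s g x)"

inductive_set gen_subgroup :: "'a::ab_group_add set \<Rightarrow> 'a set" for S where
  zero: "0 \<in> gen_subgroup S"
| gen: "x \<in> S \<Longrightarrow> x \<in> gen_subgroup S"
| diff: "x \<in> gen_subgroup S \<Longrightarrow> y \<in> gen_subgroup S \<Longrightarrow> x - y \<in> gen_subgroup S"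

definition augment :: "('m::ab_group_add \<Rightarrow> 'm) \<Rightarrow> ('m \<Rightarrow> 'm) \<Rightarrow> (nat \<times> nat) set \<Rightarrow> 'm set" where
  "augment r s H = gen_subgroup {dact r s g x - x | g x. g \<in> H}"

definition quot_card :: "'m::ab_group_add set \<Rightarrow> 'm set \<Rightarrow> nat" where
  "quot_card A B = card ((\<lambda>x. (+) x ` B) ` A)"

text \<open>hat h^0(H,M) = |M^H / N_H M| and hat h^{-1}(H,M) = |ker N_H / I_H M|.\<close>
definition tate0 :: "('m::ab_group_add \<Rightarrow> 'm) \<Rightarrow> ('m \<Rightarrow> 'm) \<Rightarrow> (nat \<times> nat) set \<Rightarrow> nat" where
  "tate0 r s H = quot_card (fixedpts r s H) (range (normmap r s H))"

definition tate_m1 :: "('m::ab_group_add \<Rightarrow> 'm) \<Rightarrow> ('m \<Rightarrow> 'm) \<Rightarrow> (nat \<times> nat) set \<Rightarrow> nat" where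
  "tate_m1 r s H = quot_card {x. normmap r s H x = 0} (augment r s H)"

definition theta_prod :: "nat \<Rightarrow> ((nat \<times> nat) set \<Rightarrow> real) \<Rightarrow> real" where
  "theta_prod q f = f Triv * f (Dgrp q) ^ 2 / (f (Rgrp q) * f Sgrp ^ 2)"

text \<open>Regulator constant of a finite module: prod_H (|M^H|^{-2} * 1)^{n_H}
  (torsion-free part is zero, so the determinant factor is the empty determinant 1).\<close>
definition reg_const_finite :: "nat \<Rightarrow> ('m::ab_group_add \<Rightarrow> 'm) \<Rightarrow> ('m \<Rightarrow> 'm) \<Rightarrow> real" where
  "reg_const_finite q r s = theta_prod q (\<lambda>H. 1 / real (card (fixedpts r s H)) ^ 2)"

definition dual_carrier :: "('m::ab_group_add \<Rightarrow> qz) set" where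
  "dual_carrier = {\<psi>. \<forall>x y. \<psi> (x + y) = \<psi> x + \<psi> y}"

definition dual_act :: "nat \<Rightarrow> ('m \<Rightarrow> 'm) \<Rightarrow> ('m \<Rightarrow> 'm) \<Rightarrow> nat \<times> nat \<Rightarrow> ('m \<Rightarrow> qz) \<Rightarrow> ('m \<Rightarrow> qz)" where
  "dual_act q r s g \<psi> = (\<lambda>m. \<psi> (dact r s (dinv q g) m))"

definition iso_to_dual :: "nat \<Rightarrow> ('m::ab_group_add \<Rightarrow> 'm) \<Rightarrow> ('m \<Rightarrow> 'm) \<Rightarrow> bool" where
  "iso_to_dual q r s \<longleftrightarrow> (\<exists>f :: 'm \<Rightarrow> ('m \<Rightarrow> qz).
      bij_betw f UNIV dual_carrier \<and>
      (\<forall>x y. f (x + y) = (\<lambda>m. f x m + f y m)) \<and>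
      (\<forall>g\<in>Dgrp q. \<forall>x. f (dact r s g x) = dual_act q r s g (f x)))"

end

(*
  Write P = (sigma - 1)M and Q = (rho sigma - 1)M. The augmentation submodule I_D M is P + Q,
  and since q is odd, sigma and rho sigma are conjugate and P \<inter> Q = (sigma - 1)M^R. Counting
  kernels and images of additive maps gives |M| = |P| |M^sigma| = |Q| |M^sigma|,
  |M^R| = |P \<inter> Q| |M^D| and |P + Q| |P \<inter> Q| = |P| |Q|; together with
  h^0(D) = |M^D| / |N_D M|, h^-1(D) = |ker N_D| / |I_D M| and |M| = |N_D M| |ker N_D| this is the
  first identity. For the cyclic subgroups R, Sigma and 1 the orders of h^0 and h^-1 agree
  (the Herbrand quotient of a finite module is 1), so the regulator constant and the
  Theta-combination of Tate cohomology both reduce to the D-term. If M is isomorphic to its dual,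
  M^D corresponds to the characters vanishing on I_D M; there are |M / I_D M| of them, which
  forces h^0(D) = h^-1(D).
*)

theory Submission
  imports Defs "HOL-Library.Product_Plus" "HOL-Library.Function_Algebras"
begin

section \<open>Subgroups and counting in finite abelian groups\<close>

definition add_subgroup :: "'a::ab_group_add set \<Rightarrow> bool" where
  "add_subgroup B \<longleftrightarrow> 0 \<in> B \<and> (\<forall>x\<in>B. \<forall>y\<in>B. x - y \<in> B)"

lemma add_subgroup_zero: "add_subgroup B \<Longrightarrow> 0 \<in> B"
  by (simp add: add_subgroup_def)

lemma add_subgroup_diff: "add_subgroup B \<Longrightarrow> x \<in> B \<Longrightarrow> y \<in> B \<Longrightarrow> x - y \<in> B"
  by (simp add: add_subgroup_def)

lemma add_subgroup_minus: "add_subgroup B \<Longrightarrow> x \<in> B \<Longrightarrow> - x \<in> B"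
  using add_subgroup_diff[of B 0 x] by (simp add: add_subgroup_zero)

lemma add_subgroup_add: "add_subgroup B \<Longrightarrow> x \<in> B \<Longrightarrow> y \<in> B \<Longrightarrow> x + y \<in> B"
  using add_subgroup_diff[of B x "- y"] by (simp add: add_subgroup_minus)

lemma add_subgroup_UNIV: "add_subgroup UNIV"
  by (simp add: add_subgroup_def)

lemma card_add_subgroup_pos: "finite B \<Longrightarrow> add_subgroup B \<Longrightarrow> 0 < card B"
  using add_subgroup_zero card_gt_0_iff by blast

lemma add_subgroup_gen_subgroup: "add_subgroup (gen_subgroup S)"
  by (auto simp: add_subgroup_def intro: gen_subgroup.intros)

lemma gen_subgroup_least: "S \<subseteq> T \<Longrightarrow> add_subgroup T \<Longrightarrow> gen_subgroup S \<subseteq> T"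
proof
  fix x assume "S \<subseteq> T" "add_subgroup T" "x \<in> gen_subgroup S"
  then show "x \<in> T"
    by (induction rule: gen_subgroup.induct[OF \<open>x \<in> gen_subgroup S\<close>])
      (auto simp: add_subgroup_zero add_subgroup_diff)
qed

lemma gen_subgroup_eq:
  "S \<subseteq> T \<Longrightarrow> T \<subseteq> gen_subgroup S \<Longrightarrow> add_subgroup T \<Longrightarrow> gen_subgroup S = T"
  using gen_subgroup_least by blast

context additive
begin

lemma add_subgroup_range: "add_subgroup (range f)"
  unfolding add_subgroup_def
proof (intro conjI ballI)
  show "0 \<in> range f" using zero by (metis rangeI)
  show "x - y \<in> range f" if "x \<in> range f" "y \<in> range f" for x y
    using that by (auto simp: diff[symmetric])
qed

lemma add_subgroup_kernel: "add_subgroup G \<Longrightarrow> add_subgroup {x\<in>G. f x = 0}"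
  unfolding add_subgroup_def by (auto simp: zero diff)

lemma card_image_mult_card_kernel:
  assumes "finite G" and G: "add_subgroup G"
  shows "card (f ` G) * card {x\<in>G. f x = 0} = card G"
proof -
  let ?K = "{x\<in>G. f x = 0}"
  have fibre: "card {x\<in>G. f x = y} = card ?K" if "y \<in> f ` G" for y
  proof -
    obtain x0 where x0: "x0 \<in> G" "f x0 = y" using \<open>y \<in> f ` G\<close> by auto
    have "bij_betw (\<lambda>x. x - x0) {x\<in>G. f x = y} ?K"
      by (rule bij_betw_byWitness[where f' = "\<lambda>x. x + x0"])
        (use x0 G in \<open>auto simp: add_subgroup_diff add_subgroup_add diff add\<close>)
    then show ?thesis by (rule bij_betw_same_card)
  qed
  have "card G = card (\<Union>y\<in>f ` G. {x\<in>G. f x = y})"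
    by (rule arg_cong[where f = card]) auto
  also have "\<dots> = (\<Sum>y\<in>f ` G. card {x\<in>G. f x = y})"
    by (rule card_UN_disjoint) (use \<open>finite G\<close> in auto)
  also have "\<dots> = card (f ` G) * card ?K"
    using fibre by simp
  finally show ?thesis by simp
qed

end

lemma card_range_mult_card_kernel:
  fixes f :: "'a::{ab_group_add,finite} \<Rightarrow> 'b::ab_group_add"
  assumes "additive f"
  shows "card (range f) * card {x. f x = 0} = card (UNIV :: 'a set)"
  using additive.card_image_mult_card_kernel[OF assms, of UNIV] by (simp add: add_subgroup_UNIV)

lemma coset_eq:
  assumes B: "add_subgroup B" and "z \<in> (+) x ` B"
  shows "(+) z ` B = (+) x ` B"
proof -
  obtain b where b: "b \<in> B" "z = x + b" using assms(2) by auto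
  show ?thesis
  proof (intro equalityI image_subsetI)
    fix c assume "c \<in> B"
    show "z + c \<in> (+) x ` B"
      using B b \<open>c \<in> B\<close> by (auto intro!: image_eqI[where x = "b + c"] add_subgroup_add)
    show "x + c \<in> (+) z ` B"
      using B b \<open>c \<in> B\<close> by (auto intro!: image_eqI[where x = "c - b"] add_subgroup_diff)
  qed
qed

lemma quot_card_mult_card:
  fixes A B :: "'a::ab_group_add set"
  assumes "finite A" and A: "add_subgroup A" and B: "add_subgroup B" and "B \<subseteq> A"
  shows "quot_card A B * card B = card A"
proof -
  let ?C = "(\<lambda>x. (+) x ` B) ` A"
  have union: "\<Union>?C = A"
  proof
    show "\<Union>?C \<subseteq> A"
      using A \<open>B \<subseteq> A\<close> by (auto intro: add_subgroup_add)
    show "A \<subseteq> \<Union>?C"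
    proof
      fix x assume "x \<in> A"
      have "x \<in> (+) x ` B"
        using add_subgroup_zero[OF B] by (metis add.right_neutral imageI)
      then show "x \<in> \<Union>?C" using \<open>x \<in> A\<close> by blast
    qed
  qed
  have disjoint: "c1 \<inter> c2 = {}" if "c1 \<in> ?C" "c2 \<in> ?C" "c1 \<noteq> c2" for c1 c2
  proof (rule ccontr)
    assume "c1 \<inter> c2 \<noteq> {}"
    then obtain z where "z \<in> c1" "z \<in> c2" by blast
    with that(1,2) have "c1 = (+) z ` B" "c2 = (+) z ` B"
      using coset_eq[OF B] by blast+
    with that(3) show False by simp
  qed
  have card_coset: "card c = card B" if "c \<in> ?C" for c
    using that by (auto intro: card_image simp: inj_on_def)
  have "card B * card ?C = card (\<Union>?C)"
    by (rule card_partition) (use \<open>finite A\<close> union card_coset disjoint in auto)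
  then show ?thesis using union by (simp add: quot_card_def mult.commute)
qed

lemma quot_card_pos: "finite A \<Longrightarrow> A \<noteq> {} \<Longrightarrow> 0 < quot_card A B"
  by (simp add: quot_card_def card_gt_0_iff)

lemma add_subgroup_sumset:
  assumes A: "add_subgroup A" and B: "add_subgroup B"
  shows "add_subgroup {a + b | a b. a \<in> A \<and> b \<in> B}"
  unfolding add_subgroup_def
proof (intro conjI ballI)
  show "0 \<in> {a + b | a b. a \<in> A \<and> b \<in> B}"
    using add_subgroup_zero[OF A] add_subgroup_zero[OF B] by force
  fix x y
  assume "x \<in> {a + b | a b. a \<in> A \<and> b \<in> B}" "y \<in> {a + b | a b. a \<in> A \<and> b \<in> B}"
  then obtain a1 b1 a2 b2
    where "x = a1 + b1" "y = a2 + b2" "a1 \<in> A" "a2 \<in> A" "b1 \<in> B" "b2 \<in> B"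
    by blast
  moreover have "x - y = (a1 - a2) + (b1 - b2)" using calculation by (simp add: algebra_simps)
  ultimately show "x - y \<in> {a + b | a b. a \<in> A \<and> b \<in> B}"
    using add_subgroup_diff[OF A] add_subgroup_diff[OF B] by blast
qed

lemma card_sumset_mult_card_Int:
  fixes A B :: "'a::ab_group_add set"
  assumes "finite A" "finite B" and A: "add_subgroup A" and B: "add_subgroup B"
  shows "card {a + b | a b. a \<in> A \<and> b \<in> B} * card (A \<inter> B) = card A * card B"
proof -
  let ?f = "\<lambda>p::'a \<times> 'a. fst p + snd p"
  interpret additive ?f by unfold_locales (simp add: algebra_simps)
  have "add_subgroup (A \<times> B)"
    using A B unfolding add_subgroup_def by (auto simp: zero_prod_def)
  then have "card (?f ` (A \<times> B)) * card {p\<in>A \<times> B. ?f p = 0} = card (A \<times> B)"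
    using assms by (intro card_image_mult_card_kernel) auto
  moreover have "?f ` (A \<times> B) = {a + b | a b. a \<in> A \<and> b \<in> B}" by force
  moreover have "{p\<in>A \<times> B. ?f p = 0} = (\<lambda>a. (a, - a)) ` (A \<inter> B)"
    using add_subgroup_minus[OF B] by (force simp: add_eq_0_iff2)
  moreover have "card ((\<lambda>a. (a, - a)) ` (A \<inter> B)) = card (A \<inter> B)"
    by (simp add: card_image inj_on_def)
  ultimately show ?thesis by (simp add: card_cartesian_product)
qed

text \<open>With \<open>N\<close> the norm and \<open>f = g - 1\<close> for a generator \<open>g\<close> of a cyclic group, this says that
  the Herbrand quotient of a finite module is 1.\<close>

lemma quot_card_kernel_range_swap:
  fixes N f :: "'a::{ab_group_add,finite} \<Rightarrow> 'a"
  assumes N: "additive N" and f: "additive f"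
    and "range N \<subseteq> {x. f x = 0}" and "range f \<subseteq> {x. N x = 0}"
  shows "quot_card {x. f x = 0} (range N) = quot_card {x. N x = 0} (range f)"
proof -
  let ?a = "quot_card {x. f x = 0} (range N)" and ?b = "quot_card {x. N x = 0} (range f)"
  have a: "?a * card (range N) = card {x. f x = 0}"
    using assms additive.add_subgroup_kernel[OF f add_subgroup_UNIV]
    by (intro quot_card_mult_card) (auto simp: additive.add_subgroup_range)
  have b: "?b * card (range f) = card {x. N x = 0}"
    using assms additive.add_subgroup_kernel[OF N add_subgroup_UNIV]
    by (intro quot_card_mult_card) (auto simp: additive.add_subgroup_range)
  have "?a * (card (range N) * card (range f)) = card (range f) * card {x. f x = 0}"
    using a by (simp add: ac_simps)
  also have "\<dots> = card (range N) * card {x. N x = 0}"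
    using card_range_mult_card_kernel[OF N] card_range_mult_card_kernel[OF f] by simp
  also have "\<dots> = ?b * (card (range N) * card (range f))"
    using b by (simp add: ac_simps)
  finally show ?thesis
    using N f by (simp add: card_add_subgroup_pos additive.add_subgroup_range)
qed

section \<open>Characters with values in \<open>\<rat>/\<int>\<close>\<close>

primrec nmul :: "nat \<Rightarrow> 'a::ab_group_add \<Rightarrow> 'a" where
  "nmul 0 x = 0"
| "nmul (Suc n) x = x + nmul n x"

lemma nmul_zero [simp]: "nmul n 0 = 0"
  by (induction n) simp_all

lemma nmul_add: "nmul (m + n) x = nmul m x + nmul n x"
  by (induction m) (simp_all add: add.assoc)

lemma nmul_mult: "nmul (m * n) x = nmul m (nmul n x)"
  by (induction m) (simp_all add: nmul_add)

lemma additive_nmul: "additive (nmul n)"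
  by unfold_locales (induction n, simp_all add: algebra_simps)

lemma (in additive) nmul: "f (nmul n x) = nmul n (f x)"
  by (induction n) (simp_all add: zero add)

lemma add_subgroup_nmul: "add_subgroup B \<Longrightarrow> x \<in> B \<Longrightarrow> nmul n x \<in> B"
  by (induction n) (simp_all add: add_subgroup_zero add_subgroup_add)

lemma nmul_eq_0_exists:
  fixes a :: "'a::{ab_group_add,finite}"
  shows "\<exists>n>0. nmul n a = 0"
proof -
  have "\<not> inj (\<lambda>i::nat. nmul i a)"
    using inj_on_finite[of "\<lambda>i::nat. nmul i a" UNIV UNIV] by auto
  then obtain i j where "i < j" "nmul i a = nmul j a"
    unfolding inj_def by (metis linorder_neqE_nat)
  moreover have "nmul j a = nmul (j - i) a + nmul i a"
    using \<open>i < j\<close> nmul_add[of "j - i" i a] by simp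
  ultimately show ?thesis
    by (intro exI[of _ "j - i"]) simp
qed

lemma nmul_abs_qz: "nmul n (abs_qz x) = abs_qz (of_nat n * x)"
  by (induction n) (simp_all add: zero_qz_def plus_qz.abs_eq algebra_simps)

lemma qz_torsion_subset:
  assumes "0 < n"
  shows "{t::qz. nmul n t = 0} \<subseteq> (\<lambda>j. abs_qz (of_nat j / of_nat n)) ` {..<n}"
proof
  fix t :: qz assume "t \<in> {t. nmul n t = 0}"
  obtain x where x: "t = abs_qz x" by (metis Quotient_abs_rep Quotient_qz)
  with \<open>t \<in> {t. nmul n t = 0}\<close> have "of_nat n * x \<in> \<int>"
    by (simp add: nmul_abs_qz zero_qz_def qz.abs_eq_iff)
  then obtain k where k: "of_nat n * x = of_int k" by (metis Ints_cases)
  define j where "j = nat (k mod int n)"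
  have "k = int n * (k div int n) + int j" using assms by (simp add: j_def)
  then have "of_int k = (of_nat n :: rat) * of_int (k div int n) + of_nat j"
    using arg_cong[where f = "of_int :: int \<Rightarrow> rat"] by fastforce
  then have "x - of_nat j / of_nat n = of_int (k div int n)"
    using k assms by (simp add: field_simps)
  then have "t = abs_qz (of_nat j / of_nat n)"
    unfolding x by (simp add: qz.abs_eq_iff)
  moreover have "j < n" using assms by (simp add: j_def nat_less_iff)
  ultimately show "t \<in> (\<lambda>j. abs_qz (of_nat j / of_nat n)) ` {..<n}" by blast
qed

lemma card_qz_torsion_le:
  assumes "0 < n"
  shows "card {t::qz. nmul n t = 0} \<le> n"
proof -
  have "card {t::qz. nmul n t = 0} \<le> card ((\<lambda>j. abs_qz (of_nat j / of_nat n)) ` {..<n})"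
    by (rule card_mono[OF _ qz_torsion_subset[OF assms]]) simp
  also have "\<dots> \<le> n"
    using card_image_le[of "{..<n}"] by simp
  finally show ?thesis .
qed

definition annihilator :: "'m::ab_group_add set \<Rightarrow> ('m \<Rightarrow> qz) set" where
  "annihilator B = {\<psi> \<in> dual_carrier. \<forall>b\<in>B. \<psi> b = 0}"

definition adjoin :: "'a::ab_group_add set \<Rightarrow> 'a \<Rightarrow> 'a set" where
  "adjoin B a = {b + nmul k a | b k. b \<in> B}"

lemma additive_dual_carrier: "\<psi> \<in> dual_carrier \<Longrightarrow> additive \<psi>"
  by unfold_locales (simp add: dual_carrier_def)

lemma add_subgroup_annihilator: "add_subgroup (annihilator B)"
  unfolding add_subgroup_def annihilator_def dual_carrier_def by (auto simp: algebra_simps)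

lemma add_subgroup_adjoin:
  assumes B: "add_subgroup B" and "0 < n" and "nmul n a \<in> B"
  shows "add_subgroup (adjoin B a)"
  unfolding add_subgroup_def
proof (intro conjI ballI)
  show "0 \<in> adjoin B a"
    unfolding adjoin_def using add_subgroup_zero[OF B] by (auto intro!: exI[of _ 0])
  fix x y assume "x \<in> adjoin B a" "y \<in> adjoin B a"
  then obtain b1 k1 b2 k2 where x: "x = b1 + nmul k1 a" "b1 \<in> B"
    and y: "y = b2 + nmul k2 a" "b2 \<in> B" unfolding adjoin_def by auto
  \<comment> \<open>\<open>-k2 a = k2 (n - 1) a - k2 n a\<close> with \<open>k2 n a \<in> B\<close>\<close>
  have "nmul (k2 * n) a = nmul (k2 * (n - 1)) a + nmul k2 a"
    using \<open>0 < n\<close> nmul_add[of "k2 * (n - 1)" k2 a]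
    by (metis Suc_diff_1 mult_Suc_right add.commute)
  then have "x - y = (b1 - b2 - nmul (k2 * n) a) + nmul (k1 + k2 * (n - 1)) a"
    using x y by (simp add: nmul_add algebra_simps)
  moreover have "b1 - b2 - nmul (k2 * n) a \<in> B"
    using x y assms nmul_mult[of k2 n a] by (simp add: add_subgroup_diff add_subgroup_nmul)
  ultimately show "x - y \<in> adjoin B a" unfolding adjoin_def by blast
qed

lemma subset_adjoin: "B \<subseteq> adjoin B a"
  unfolding adjoin_def by (force intro: exI[of _ 0])

lemma mem_adjoin: "add_subgroup B \<Longrightarrow> a \<in> adjoin B a"
  unfolding adjoin_def using add_subgroup_zero by (force intro!: exI[of _ 0] exI[of _ 1])

lemma adjoin_subset: "add_subgroup C \<Longrightarrow> B \<subseteq> C \<Longrightarrow> a \<in> C \<Longrightarrow> adjoin B a \<subseteq> C"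
  unfolding adjoin_def by (auto intro!: add_subgroup_add add_subgroup_nmul)

lemma card_adjoin_ge:
  fixes B :: "'a::{ab_group_add,finite} set"
  assumes B: "add_subgroup B" and n_min: "\<And>k. 0 < k \<Longrightarrow> k < n \<Longrightarrow> nmul k a \<notin> B"
  shows "n * card B \<le> card (adjoin B a)"
proof -
  have "inj_on (\<lambda>(b, k). b + nmul k a) (B \<times> {..<n})"
  proof (rule inj_onI, clarify)
    fix b1 k1 b2 k2 assume b: "b1 \<in> B" "k1 < n" "b2 \<in> B" "k2 < n"
      and eq: "b1 + nmul k1 a = b2 + nmul k2 a"
    have "k1 = k2" if "k1 < k2" "k2 < n" "b1 + nmul k1 a = b2 + nmul k2 a" "b1 \<in> B" "b2 \<in> B"
      for k1 k2 b1 b2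
    proof -
      have "nmul (k2 - k1) a = b1 - b2"
        using that nmul_add[of "k2 - k1" k1 a] by (simp add: algebra_simps)
      then show ?thesis
        using n_min[of "k2 - k1"] that add_subgroup_diff[OF B] by (simp add: less_imp_diff_less)
    qed
    from this[of k1 k2 b1 b2] this[of k2 k1 b2 b1] b eq have "k1 = k2"
      by (metis linorder_neqE_nat)
    with eq show "b1 = b2 \<and> k1 = k2" by simp
  qed
  moreover have "(\<lambda>(b, k). b + nmul k a) ` (B \<times> {..<n}) \<subseteq> adjoin B a"
    unfolding adjoin_def by auto
  ultimately have "card (B \<times> {..<n}) \<le> card (adjoin B a)"
    by (intro card_inj_on_le) auto
  then show ?thesis by (simp add: card_cartesian_product mult.commute)
qed

lemma annihilator_adjoin:
  "add_subgroup B \<Longrightarrow> annihilator (adjoin B a) = {\<psi> \<in> annihilator B. \<psi> a = 0}"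
  using subset_adjoin[of B a] mem_adjoin[of B a]
  by (auto simp: annihilator_def adjoin_def additive.add[OF additive_dual_carrier]
      additive.nmul[OF additive_dual_carrier] additive.zero[OF additive_dual_carrier])

lemma card_annihilator_le_adjoin:
  fixes B :: "'m::{ab_group_add,finite} set"
  assumes fin: "finite (dual_carrier :: ('m \<Rightarrow> qz) set)"
    and B: "add_subgroup B" and "0 < n" and "nmul n a \<in> B"
  shows "card (annihilator B) \<le> n * card (annihilator (adjoin B a))"
proof -
  interpret eval: additive "\<lambda>\<psi>::'m \<Rightarrow> qz. \<psi> a" by unfold_locales simp
  have "finite (annihilator B)" using fin by (simp add: annihilator_def)
  then have "card ((\<lambda>\<psi>. \<psi> a) ` annihilator B) * card (annihilator (adjoin B a))
      = card (annihilator B)"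
    using eval.card_image_mult_card_kernel[OF _ add_subgroup_annihilator] annihilator_adjoin[OF B]
    by simp
  moreover have "(\<lambda>\<psi>. \<psi> a) ` annihilator B \<subseteq> {t. nmul n t = 0}"
    using \<open>nmul n a \<in> B\<close>
    by (auto simp: annihilator_def additive.nmul[OF additive_dual_carrier, symmetric])
  then have "card ((\<lambda>\<psi>. \<psi> a) ` annihilator B) \<le> n"
    using card_qz_torsion_le[OF \<open>0 < n\<close>] finite_subset[OF qz_torsion_subset[OF \<open>0 < n\<close>]]
    by (meson card_mono finite_imageI finite_lessThan le_trans)
  ultimately show ?thesis by (metis mult_le_mono1)
qed

text \<open>Adjoining an element of order \<open>n\<close> modulo \<open>B\<close> multiplies \<open>|B|\<close> by \<open>n\<close> and divides the
  number of characters by at most \<open>n\<close>, since \<open>\<rat>/\<int>\<close> has at most \<open>n\<close> elements killed by \<open>n\<close>.\<close>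

lemma card_annihilator_mult_card_mono:
  fixes B C :: "'m::{ab_group_add,finite} set"
  assumes fin: "finite (dual_carrier :: ('m \<Rightarrow> qz) set)"
  shows "add_subgroup B \<Longrightarrow> add_subgroup C \<Longrightarrow> B \<subseteq> C \<Longrightarrow>
    card (annihilator B) * card B \<le> card (annihilator C) * card C"
proof (induction "card C - card B" arbitrary: B rule: less_induct)
  case less
  show ?case
  proof (cases "B = C")
    case False
    then obtain a where "a \<in> C" "a \<notin> B" using less.prems(3) by auto
    have "\<exists>n>0. nmul n a \<in> B"
      using nmul_eq_0_exists[of a] add_subgroup_zero[OF less.prems(1)] by auto
    define n where "n = (LEAST n. 0 < n \<and> nmul n a \<in> B)"
    have n: "0 < n" "nmul n a \<in> B"
      using LeastI_ex[OF \<open>\<exists>n>0. nmul n a \<in> B\<close>] unfolding n_def by auto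
    have n_min: "nmul k a \<notin> B" if "0 < k" "k < n" for k
      using not_less_Least[of k "\<lambda>n. 0 < n \<and> nmul n a \<in> B"] that unfolding n_def by auto
    let ?B' = "adjoin B a"
    have B': "add_subgroup ?B'" "?B' \<subseteq> C"
      using add_subgroup_adjoin[OF less.prems(1) n] adjoin_subset[OF less.prems(2,3) \<open>a \<in> C\<close>] .
    have "B \<subset> ?B'"
      using subset_adjoin mem_adjoin[OF less.prems(1)] \<open>a \<notin> B\<close> by blast
    then have "card C - card ?B' < card C - card B"
      using card_mono[OF _ \<open>?B' \<subseteq> C\<close>] psubset_card_mono[of ?B' B] by simp
    have "card (annihilator B) * card B \<le> card (annihilator ?B') * (n * card B)"
      using mult_le_mono1[OF card_annihilator_le_adjoin[OF fin less.prems(1) n]]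
      by (simp add: ac_simps)
    also have "\<dots> \<le> card (annihilator ?B') * card ?B'"
      using card_adjoin_ge[OF less.prems(1) n_min] by simp
    also have "\<dots> \<le> card (annihilator C) * card C"
      using less.hyps[OF \<open>card C - card ?B' < card C - card B\<close> B'(1) less.prems(2) B'(2)] .
    finally show ?thesis .
  qed simp
qed

lemma card_annihilator_mult_card:
  fixes B :: "'m::{ab_group_add,finite} set"
  assumes card_dual: "card (dual_carrier :: ('m \<Rightarrow> qz) set) = card (UNIV :: 'm set)"
    and "add_subgroup B"
  shows "card (annihilator B) * card B = card (UNIV :: 'm set)"
proof -
  have fin: "finite (dual_carrier :: ('m \<Rightarrow> qz) set)"
    using card_dual by (metis card.infinite card_0_eq empty_not_UNIV finite)
  have "annihilator {0::'m} = dual_carrier"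
    unfolding annihilator_def using additive.zero[OF additive_dual_carrier] by blast
  moreover have "add_subgroup {0::'m}" by (simp add: add_subgroup_def)
  ultimately have "card (UNIV :: 'm set) \<le> card (annihilator B) * card B"
    using card_annihilator_mult_card_mono[OF fin, of "{0}" B] assms
    by (simp add: add_subgroup_zero)
  moreover have "annihilator (UNIV :: 'm set) = {0}"
    by (auto simp: annihilator_def dual_carrier_def)
  then have "card (annihilator B) * card B \<le> card (UNIV :: 'm set)"
    using card_annihilator_mult_card_mono[OF fin assms(2) add_subgroup_UNIV] by simp
  ultimately show ?thesis by simp
qed

section \<open>Dihedral modules\<close>

lemma additive_funpow: "additive (f :: 'a::ab_group_add \<Rightarrow> 'a) \<Longrightarrow> additive (f ^^ n)"
  by (induction n) (simp_all add: additive_def)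

lemma additive_dact: "additive r \<Longrightarrow> additive s \<Longrightarrow> additive (dact r s g)"
  unfolding dact_def by (simp add: additive_def additive.add[OF additive_funpow])

lemma additive_normmap: "additive r \<Longrightarrow> additive s \<Longrightarrow> additive (normmap r s H)"
  unfolding normmap_def by unfold_locales (simp add: additive.add[OF additive_dact] sum.distrib)

lemma add_subgroup_fixedpts: "additive r \<Longrightarrow> additive s \<Longrightarrow> add_subgroup (fixedpts r s H)"
  unfolding add_subgroup_def fixedpts_def
  by (simp add: additive.zero[OF additive_dact] additive.diff[OF additive_dact])

lemma tate0_pos:
  fixes r s :: "'m::{ab_group_add,finite} \<Rightarrow> 'm"
  shows "additive r \<Longrightarrow> additive s \<Longrightarrow> 0 < tate0 r s H"
  unfolding tate0_def using add_subgroup_zero[OF add_subgroup_fixedpts]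
  by (intro quot_card_pos) auto

lemma tate_m1_pos:
  fixes r s :: "'m::{ab_group_add,finite} \<Rightarrow> 'm"
  shows "additive r \<Longrightarrow> additive s \<Longrightarrow> 0 < tate_m1 r s H"
  unfolding tate_m1_def using additive.zero[OF additive_normmap]
  by (intro quot_card_pos) auto

lemma add_subgroup_augment: "add_subgroup (augment r s H)"
  unfolding augment_def by (rule add_subgroup_gen_subgroup)

lemma theta_prod_ratio:
  assumes "f Triv = g Triv" "f (Rgrp q) = g (Rgrp q)" "f Sgrp = g Sgrp"
    and "g Triv \<noteq> 0" "g (Rgrp q) \<noteq> 0" "g Sgrp \<noteq> 0" "g (Dgrp q) \<noteq> 0"
  shows "theta_prod q f / theta_prod q g = (f (Dgrp q) / g (Dgrp q))\<^sup>2"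
  using assms by (simp add: theta_prod_def field_simps power2_eq_square)

lemma theta_prod_inverse_square:
  fixes f :: "(nat \<times> nat) set \<Rightarrow> real"
  shows "theta_prod q (\<lambda>H. 1 / f H ^ 2) = (1 / theta_prod q f)\<^sup>2"
  by (simp add: theta_prod_def power2_eq_square divide_inverse inverse_mult_distrib ac_simps)

locale dihedral_module =
  fixes q :: nat and r s :: "'m::{ab_group_add,finite} \<Rightarrow> 'm"
  assumes odd_q: "odd q" and q_gt_1: "1 < q" and D_module: "is_D_module q r s"
begin

lemma additive_r: "additive r"
  using D_module by unfold_locales (simp add: is_D_module_def)

lemma additive_s: "additive s"
  using D_module by unfold_locales (simp add: is_D_module_def)

lemma r_pow_q: "(r ^^ q) x = x"
  using D_module by (simp add: is_D_module_def)

lemma s_s [simp]: "s (s x) = x"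
  using D_module by (simp add: is_D_module_def)

lemma s_r_s: "s (r (s x)) = (r ^^ (q - 1)) x"
  using D_module by (simp add: is_D_module_def)

lemma r_s_r_s: "r (s (r (s x))) = x"
  using s_r_s[of x] r_pow_q[of x] q_gt_1 by (metis Suc_diff_1 funpow.simps(2) gr_implies_not0 o_apply not_gr0)

lemma r_pow_mult_q: "(r ^^ (k * q)) x = x"
  by (induction k arbitrary: x) (simp_all add: funpow_add r_pow_q)

lemma r_pow_mod: "(r ^^ n) x = (r ^^ (n mod q)) x"
  using r_pow_mult_q[of "n div q" x] funpow_add[of "n mod q" "n div q * q" r]
  by (metis comp_apply mod_div_mult_eq)

lemma r_pow_fixed: "r x = x \<Longrightarrow> (r ^^ n) x = x"
  by (induction n) simp_all

lemma s_r_pow: "s ((r ^^ i) x) = (r ^^ (i * (q - 1))) (s x)"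
proof (induction i)
  case (Suc i)
  have "s ((r ^^ Suc i) x) = s (r (s (s ((r ^^ i) x))))" by simp
  also have "\<dots> = (r ^^ (q - 1)) ((r ^^ (i * (q - 1))) (s x))" by (simp only: s_r_s Suc)
  also have "\<dots> = (r ^^ (Suc i * (q - 1))) (s x)" by (simp add: funpow_add)
  finally show ?case .
qed simp

lemma inj_r_pow: "inj (r ^^ n)"
proof (rule inj_on_inverseI)
  fix x
  have "(r ^^ (n * (q - 1))) ((r ^^ n) x) = (r ^^ (n * q)) x"
    using q_gt_1 by (simp add: funpow_add[symmetric, THEN fun_cong, simplified] algebra_simps)
  then show "(r ^^ (n * (q - 1))) ((r ^^ n) x) = x" by (simp add: r_pow_mult_q)
qed

definition norm_R :: "'m \<Rightarrow> 'm" where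
  "norm_R x = (\<Sum>i<q. (r ^^ i) x)"

lemma additive_norm_R: "additive norm_R"
  unfolding norm_R_def by unfold_locales (simp add: additive.add[OF additive_funpow[OF additive_r]] sum.distrib)

lemma r_norm_R: "r (norm_R x) = norm_R x"
proof -
  have "r (norm_R x) = (\<Sum>i<q. (r ^^ Suc i) x)"
    unfolding norm_R_def by (simp add: additive.sum[OF additive_r])
  also have "\<dots> = norm_R x"
    using sum.lessThan_Suc_shift[of "\<lambda>i. (r ^^ i) x" q] r_pow_q[of x]
    by (simp add: norm_R_def add.commute)
  finally show ?thesis .
qed

lemma norm_R_r_pow: "norm_R ((r ^^ k) x) = norm_R x"
proof (induction k)
  case (Suc k)
  have "norm_R ((r ^^ Suc k) x) = r (norm_R ((r ^^ k) x))"
    unfolding norm_R_def by (simp add: additive.sum[OF additive_r] funpow_swap1)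
  then show ?case using Suc by (simp add: r_norm_R)
qed simp

lemma norm_R_r: "norm_R (r x) = norm_R x"
  using norm_R_r_pow[of 1] by simp

lemma norm_R_fixed: "r x = x \<Longrightarrow> norm_R x = nmul q x"
proof -
  have "(\<Sum>i<n. y) = nmul n y" for n and y :: 'm
    by (induction n) (simp_all add: add.commute)
  then show "r x = x \<Longrightarrow> norm_R x = nmul q x"
    unfolding norm_R_def by (simp add: r_pow_fixed)
qed

lemma s_norm_R: "s (norm_R x) = norm_R (s x)"
proof -
  have "s (norm_R x) = (\<Sum>i<q. (r ^^ ((q - i) mod q)) (s x))"
  proof -
    have "(i * (q - 1)) mod q = (q - i) mod q" if "i < q" for i
    proof (cases i)
      case (Suc j)
      then have "i * (q - 1) = j * q + (q - i)" using that
        by (simp add: algebra_simps diff_mult_distrib2)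
      then show ?thesis by simp
    qed simp
    then show ?thesis
      unfolding norm_R_def additive.sum[OF additive_s] s_r_pow
      by (intro sum.cong refl) (metis lessThan_iff r_pow_mod)
  qed
  also have "\<dots> = (\<Sum>j<q. (r ^^ j) (s x))"
  proof (rule sum.reindex_bij_betw)
    have "inj_on (\<lambda>i. (q - i) mod q) {..<q}"
      by (rule inj_onI) (auto simp: mod_if split: if_splits)
    moreover have "(\<lambda>i. (q - i) mod q) ` {..<q} \<subseteq> {..<q}"
      using q_gt_1 by auto
    ultimately show "bij_betw (\<lambda>i. (q - i) mod q) {..<q} {..<q}"
      by (simp add: bij_betw_def endo_inj_surj)
  qed
  finally show ?thesis by (simp add: norm_R_def)
qed

lemma Rgrp_eq: "Rgrp q = (\<lambda>a. (a, 0)) ` {..<q}"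
  by (auto simp: Rgrp_def)

lemma Dgrp_eq: "Dgrp q = (\<lambda>a. (a, 0)) ` {..<q} \<union> (\<lambda>a. (a, 1)) ` {..<q}"
  by (auto simp: Dgrp_def less_2_cases_iff)

lemma fixedpts_Triv: "fixedpts r s Triv = UNIV"
  by (auto simp: fixedpts_def Triv_def dact_def)

lemma fixedpts_Sgrp: "fixedpts r s Sgrp = {x. s x = x}"
  by (auto simp: fixedpts_def Sgrp_def dact_def)

lemma fixedpts_Rgrp: "fixedpts r s (Rgrp q) = {x. r x = x}"
  using q_gt_1 by (fastforce simp: fixedpts_def Rgrp_def dact_def r_pow_fixed)

lemma fixedpts_Dgrp: "fixedpts r s (Dgrp q) = {x. r x = x \<and> s x = x}"
proof -
  have "(1, 0) \<in> Dgrp q" "(0, 1) \<in> Dgrp q" using q_gt_1 by (auto simp: Dgrp_def)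
  then show ?thesis
    by (auto simp: fixedpts_def Dgrp_def dact_def r_pow_fixed less_2_cases_iff)
qed

lemma normmap_Triv: "normmap r s Triv = id"
  by (auto simp: normmap_def Triv_def dact_def)

lemma normmap_Sgrp: "normmap r s Sgrp = (\<lambda>x. x + s x)"
  by (auto simp: normmap_def Sgrp_def dact_def)

lemma normmap_Rgrp: "normmap r s (Rgrp q) = norm_R"
  unfolding normmap_def Rgrp_eq norm_R_def
  by (subst sum.reindex) (auto simp: inj_on_def dact_def)

lemma normmap_Dgrp: "normmap r s (Dgrp q) = (\<lambda>x. norm_R x + norm_R (s x))"
proof
  fix x
  have "normmap r s (Dgrp q) x
      = (\<Sum>g\<in>(\<lambda>a. (a, 0)) ` {..<q}. dact r s g x)
        + (\<Sum>g\<in>(\<lambda>a. (a, 1::nat)) ` {..<q}. dact r s g x)"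
    unfolding normmap_def Dgrp_eq by (rule sum.union_disjoint) auto
  also have "\<dots> = norm_R x + norm_R (s x)"
    unfolding norm_R_def by (simp add: sum.reindex inj_on_def dact_def)
  finally show "normmap r s (Dgrp q) x = norm_R x + norm_R (s x)" .
qed

lemma augment_Triv: "augment r s Triv = {0}"
  unfolding augment_def
  by (rule gen_subgroup_eq) (auto simp: Triv_def dact_def add_subgroup_def intro: gen_subgroup.zero)

lemma augment_Sgrp: "augment r s Sgrp = range (\<lambda>x. s x - x)"
  unfolding augment_def
proof (rule gen_subgroup_eq)
  show "{dact r s g x - x |g x. g \<in> Sgrp} \<subseteq> range (\<lambda>x. s x - x)"
    by (auto simp: Sgrp_def dact_def intro: range_eqI[of _ _ 0] simp: additive.zero[OF additive_s])
  show "range (\<lambda>x. s x - x) \<subseteq> gen_subgroup {dact r s g x - x |g x. g \<in> Sgrp}"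
    by (force simp: Sgrp_def dact_def intro: gen_subgroup.gen)
  show "add_subgroup (range (\<lambda>x. s x - x))"
    by (rule additive.add_subgroup_range) (unfold_locales, simp add: additive.add[OF additive_s])
qed

lemma augment_Rgrp: "augment r s (Rgrp q) = range (\<lambda>x. r x - x)"
  unfolding augment_def
proof (rule gen_subgroup_eq)
  have "(r ^^ a) x - x = r y - y" if "y = (\<Sum>i<a. (r ^^ i) x)" for a x y
  proof -
    have "r y - y = (\<Sum>i<a. (r ^^ Suc i) x - (r ^^ i) x)"
      unfolding that by (simp add: additive.sum[OF additive_r] sum_subtractf)
    then show ?thesis using sum_lessThan_telescope[of "\<lambda>i. (r ^^ i) x" a] by simp
  qed
  then show "{dact r s g x - x |g x. g \<in> Rgrp q} \<subseteq> range (\<lambda>x. r x - x)"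
    by (auto simp: Rgrp_def dact_def)
  have "(1, 0) \<in> Rgrp q" using q_gt_1 by (simp add: Rgrp_def)
  then show "range (\<lambda>x. r x - x) \<subseteq> gen_subgroup {dact r s g x - x |g x. g \<in> Rgrp q}"
    by (force simp: dact_def intro: gen_subgroup.gen)
  show "add_subgroup (range (\<lambda>x. r x - x))"
    by (rule additive.add_subgroup_range) (unfold_locales, simp add: additive.add[OF additive_r])
qed

lemma tate_Triv: "tate0 r s Triv = 1" "tate_m1 r s Triv = 1"
proof -
  have "quot_card (UNIV :: 'm set) UNIV * card (UNIV :: 'm set) = card (UNIV :: 'm set)"
    by (rule quot_card_mult_card) (simp_all add: add_subgroup_UNIV)
  then show "tate0 r s Triv = 1"
    by (simp add: tate0_def fixedpts_Triv normmap_Triv)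
  show "tate_m1 r s Triv = 1"
    by (simp add: tate_m1_def normmap_Triv augment_Triv quot_card_def)
qed

lemma tate_Sgrp: "tate0 r s Sgrp = tate_m1 r s Sgrp"
proof -
  have "tate0 r s Sgrp = quot_card {x. s x - x = 0} (range (\<lambda>x. x + s x))"
    by (simp add: tate0_def fixedpts_Sgrp normmap_Sgrp)
  also have "\<dots> = quot_card {x. x + s x = 0} (range (\<lambda>x. s x - x))"
    by (rule quot_card_kernel_range_swap)
      (unfold_locales, auto simp: additive.add[OF additive_s] additive.diff[OF additive_s] algebra_simps)
  also have "\<dots> = tate_m1 r s Sgrp"
    by (simp add: tate_m1_def normmap_Sgrp augment_Sgrp)
  finally show ?thesis .
qed

lemma tate_Rgrp: "tate0 r s (Rgrp q) = tate_m1 r s (Rgrp q)"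
proof -
  have "tate0 r s (Rgrp q) = quot_card {x. r x - x = 0} (range norm_R)"
    by (simp add: tate0_def fixedpts_Rgrp normmap_Rgrp)
  also have "\<dots> = quot_card {x. norm_R x = 0} (range (\<lambda>x. r x - x))"
    by (rule quot_card_kernel_range_swap[OF additive_norm_R])
      (unfold_locales, auto simp: additive.add[OF additive_r] additive.diff[OF additive_norm_R]
        r_norm_R norm_R_r algebra_simps)
  also have "\<dots> = tate_m1 r s (Rgrp q)"
    by (simp add: tate_m1_def normmap_Rgrp augment_Rgrp)
  finally show ?thesis .
qed

definition I_s :: "'m set" where
  "I_s = range (\<lambda>x. s x - x)"

definition I_rs :: "'m set" where
  "I_rs = range (\<lambda>x. r (s x) - x)"

lemma additive_s_minus_id: "additive (\<lambda>x. s x - x)"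
  by unfold_locales (simp add: additive.add[OF additive_s])

lemma additive_rs_minus_id: "additive (\<lambda>x. r (s x) - x)"
  by unfold_locales (simp add: additive.add[OF additive_s] additive.add[OF additive_r])

lemma add_subgroup_I_s: "add_subgroup I_s"
  unfolding I_s_def by (rule additive.add_subgroup_range[OF additive_s_minus_id])

lemma add_subgroup_I_rs: "add_subgroup I_rs"
  unfolding I_rs_def by (rule additive.add_subgroup_range[OF additive_rs_minus_id])

lemma augment_Dgrp: "augment r s (Dgrp q) = {a + b | a b. a \<in> I_s \<and> b \<in> I_rs}"
  unfolding augment_def
proof (rule gen_subgroup_eq)
  let ?J = "{a + b | a b. a \<in> I_s \<and> b \<in> I_rs}"
  have J: "add_subgroup ?J"
    by (rule add_subgroup_sumset[OF add_subgroup_I_s add_subgroup_I_rs])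
  have s_gen: "s x - x \<in> ?J" for x
    using add_subgroup_zero[OF add_subgroup_I_rs] by (force simp: I_s_def)
  have r_gen: "r x - x \<in> ?J" for x
  proof -
    have "r x - x = (s x - x) + (r (s (s x)) - s x)" by simp
    moreover have "s x - x \<in> I_s" "r (s (s x)) - s x \<in> I_rs"
      unfolding I_s_def I_rs_def by (rule rangeI)+
    ultimately show ?thesis by blast
  qed
  have r_pow_gen: "(r ^^ a) x - x \<in> ?J" for a x
  proof (induction a)
    case (Suc a)
    have "(r ^^ Suc a) x - x = (r ((r ^^ a) x) - (r ^^ a) x) + ((r ^^ a) x - x)" by simp
    then show ?case using add_subgroup_add[OF J r_gen Suc.IH] by (simp only:)
  qed (use add_subgroup_zero[OF J] in simp)
  let ?G = "{dact r s g x - x |g x. g \<in> Dgrp q}"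
  show "?G \<subseteq> ?J"
  proof
    fix y assume "y \<in> ?G"
    then obtain a b x where y: "y = dact r s (a, b) x - x" and "(a, b) \<in> Dgrp q" by auto
    then consider "b = 0" | "b = 1" by (auto simp: Dgrp_def less_2_cases_iff)
    then show "y \<in> ?J"
    proof cases
      case 1
      then have "y = (r ^^ a) x - x" using y by (simp add: dact_def)
      then show ?thesis using r_pow_gen by (simp only:)
    next
      case 2
      then have "y = ((r ^^ a) (s x) - s x) + (s x - x)" using y by (simp add: dact_def)
      then show ?thesis using add_subgroup_add[OF J r_pow_gen s_gen] by (simp only:)
    qed
  qed
  have "s x - x \<in> ?G" "r (s x) - x \<in> ?G" for x
    using q_gt_1 by (intro CollectI exI[of _ "(0, 1)"] exI[of _ "(1, 1)"] exI[of _ x],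
        simp add: dact_def Dgrp_def)+
  then have "a \<in> gen_subgroup ?G" "b \<in> gen_subgroup ?G" if "a \<in> I_s" "b \<in> I_rs" for a b
    using that unfolding I_s_def I_rs_def by (auto intro: gen_subgroup.gen)
  then show "?J \<subseteq> gen_subgroup ?G"
    using add_subgroup_add[OF add_subgroup_gen_subgroup] by blast
  show "add_subgroup ?J" by (rule J)
qed

lemma card_fixed_s_eq_card_fixed_rs: "card {x. s x = x} = card {x. r (s x) = x}"
proof -
  obtain j where q: "q = Suc (2 * j)" using odd_q by (metis oddE Suc_eq_plus1)
  \<comment> \<open>\<open>\<sigma>\<close> and \<open>\<rho>\<sigma>\<close> are conjugate by a power of \<open>\<rho>\<close> because \<open>q\<close> is odd\<close>
  have "(r ^^ Suc j) ` {x. s x = x} \<subseteq> {x. r (s x) = x}"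
  proof clarify
    fix x assume "s x = x"
    have "Suc (Suc j * (q - 1)) = j * q + Suc j" unfolding q by (simp add: algebra_simps)
    then have "r (s ((r ^^ Suc j) x)) = (r ^^ (j * q + Suc j)) x"
      using \<open>s x = x\<close> by (metis funpow.simps(2) o_apply s_r_pow)
    then show "r (s ((r ^^ Suc j) x)) = (r ^^ Suc j) x"
      by (simp add: funpow_add r_pow_mult_q)
  qed
  moreover have "(r ^^ j) ` {x. r (s x) = x} \<subseteq> {x. s x = x}"
  proof clarify
    fix y assume "r (s y) = y"
    then have "s y = (r ^^ (q - 1)) y" using s_r_s[of y] by simp
    then have "s ((r ^^ j) y) = (r ^^ (j * (q - 1) + (q - 1))) y"
      by (simp add: s_r_pow funpow_add)
    also have "j * (q - 1) + (q - 1) = j * q + j" unfolding q by (simp add: algebra_simps)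
    finally show "s ((r ^^ j) y) = (r ^^ j) y"
      by (simp add: funpow_add r_pow_mult_q)
  qed
  ultimately show ?thesis
    using card_inj_on_le[OF inj_on_subset[OF inj_r_pow]] by (meson finite le_antisym subset_UNIV)
qed

lemma card_I_s: "card I_s * card {x. s x = x} = card (UNIV :: 'm set)"
  using card_range_mult_card_kernel[OF additive_s_minus_id] by (simp add: I_s_def)

lemma card_I_rs: "card I_rs * card {x. s x = x} = card (UNIV :: 'm set)"
  using card_range_mult_card_kernel[OF additive_rs_minus_id]
  by (simp add: I_rs_def card_fixed_s_eq_card_fixed_rs)

lemma I_s_Int_I_rs: "I_s \<inter> I_rs = (\<lambda>x. s x - x) ` {x. r x = x}"
proof
  show "(\<lambda>x. s x - x) ` {x. r x = x} \<subseteq> I_s \<inter> I_rs"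
  proof clarify
    fix x assume "r x = x"
    then have "r (s x) = s x"
      using s_r_s[of x] r_pow_fixed[of x "q - 1"] by (metis s_s)
    then have "s x - x = r (s x) - x" by simp
    moreover have "s x - x \<in> I_s" "r (s x) - x \<in> I_rs"
      unfolding I_s_def I_rs_def by (rule rangeI)+
    ultimately show "s x - x \<in> I_s \<inter> I_rs" by simp
  qed
  show "I_s \<inter> I_rs \<subseteq> (\<lambda>x. s x - x) ` {x. r x = x}"
  proof
    fix y assume "y \<in> I_s \<inter> I_rs"
    then obtain a b where ya: "y = s a - a" and yb: "y = r (s b) - b"
      unfolding I_s_def I_rs_def by blast
    have sy: "s y = - y"
      using ya by (simp add: additive.diff[OF additive_s])
    have "r (s y) = - y"
      using yb by (simp add: additive.diff[OF additive_s] additive.diff[OF additive_r] r_s_r_s)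
    then have ry: "r y = y"
      using sy by (simp add: additive.minus[OF additive_r])
    obtain j where q: "q = Suc (2 * j)" using odd_q by (metis oddE Suc_eq_plus1)
    \<comment> \<open>\<open>(\<sigma> - 1)(N\<^sub>R a + j y) = N\<^sub>R y - 2j y = q y - 2j y = y\<close>\<close>
    define c where "c = norm_R a + nmul j y"
    have "r c = c"
      unfolding c_def by (simp add: additive.add[OF additive_r] r_norm_R additive.nmul[OF additive_r] ry)
    have "s c - c = norm_R (s a - a) + nmul j (s y - y)"
      unfolding c_def
      by (simp add: additive.add[OF additive_s] s_norm_R additive.nmul[OF additive_s]
          additive.diff[OF additive_nmul] additive.diff[OF additive_norm_R] algebra_simps)
    also have "\<dots> = nmul q y - nmul (2 * j) y"
    proof -
      have "s y - y = - nmul 2 y" using sy by (simp add: numeral_2_eq_2)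
      then have "nmul j (s y - y) = - nmul (2 * j) y"
        by (simp add: additive.minus[OF additive_nmul] nmul_mult[symmetric] mult.commute)
      then show ?thesis using ya[symmetric] norm_R_fixed[OF ry] by simp
    qed
    also have "\<dots> = y" unfolding q by simp
    finally have "y = s c - c" by simp
    with \<open>r c = c\<close> show "y \<in> (\<lambda>x. s x - x) ` {x. r x = x}" by blast
  qed
qed

lemma additive_norm_D: "additive (normmap r s (Dgrp q))"
  by (rule additive_normmap[OF additive_r additive_s])

lemma range_norm_D_subset: "range (normmap r s (Dgrp q)) \<subseteq> fixedpts r s (Dgrp q)"
  by (auto simp: normmap_Dgrp fixedpts_Dgrp additive.add[OF additive_r] additive.add[OF additive_s]
      r_norm_R s_norm_R add.commute)

lemma augment_Dgrp_subset_kernel: "augment r s (Dgrp q) \<subseteq> {x. normmap r s (Dgrp q) x = 0}"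
proof -
  have "normmap r s (Dgrp q) a = 0" if "a \<in> I_s" for a
    using that by (auto simp: I_s_def normmap_Dgrp additive.diff[OF additive_norm_R] additive.diff[OF additive_s])
  moreover have "normmap r s (Dgrp q) b = 0" if "b \<in> I_rs" for b
    using that by (auto simp: I_rs_def normmap_Dgrp additive.diff[OF additive_norm_R] additive.diff[OF additive_s]
        norm_R_r s_r_s norm_R_r_pow)
  ultimately show ?thesis
    by (auto simp: augment_Dgrp additive.add[OF additive_norm_D])
qed

lemma card_I_s_Int_I_rs: "card (I_s \<inter> I_rs) * card (fixedpts r s (Dgrp q)) = card {x. r x = x}"
proof -
  have "add_subgroup {x. r x = x}"
    using add_subgroup_fixedpts[OF additive_r additive_s] by (simp add: fixedpts_Rgrp[symmetric])
  then have "card ((\<lambda>x. s x - x) ` {x. r x = x}) * card {x \<in> {x. r x = x}. s x - x = 0}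
      = card {x. r x = x}"
    by (intro additive.card_image_mult_card_kernel[OF additive_s_minus_id]) auto
  then show ?thesis
    by (simp add: I_s_Int_I_rs fixedpts_Dgrp conj_commute)
qed

lemma card_augment_Dgrp: "card (augment r s (Dgrp q)) * card (I_s \<inter> I_rs) = card I_s * card I_rs"
  unfolding augment_Dgrp
  by (rule card_sumset_mult_card_Int[OF _ _ add_subgroup_I_s add_subgroup_I_rs]) auto

lemma tate0_Dgrp_mult:
  "tate0 r s (Dgrp q) * card (range (normmap r s (Dgrp q))) = card (fixedpts r s (Dgrp q))"
  unfolding tate0_def
  by (rule quot_card_mult_card[OF _ add_subgroup_fixedpts[OF additive_r additive_s]
        additive.add_subgroup_range[OF additive_norm_D] range_norm_D_subset]) simp

lemma tate_m1_Dgrp_mult: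
  "tate_m1 r s (Dgrp q) * card (augment r s (Dgrp q)) = card {x. normmap r s (Dgrp q) x = 0}"
  unfolding tate_m1_def
  using additive.add_subgroup_kernel[OF additive_norm_D add_subgroup_UNIV]
  by (intro quot_card_mult_card add_subgroup_augment augment_Dgrp_subset_kernel) simp_all

theorem tate_Dgrp_identity:
  "tate_m1 r s (Dgrp q) * (card (UNIV :: 'm set) * card (fixedpts r s (Dgrp q)) ^ 2)
   = tate0 r s (Dgrp q) * (card (fixedpts r s (Rgrp q)) * card (fixedpts r s Sgrp) ^ 2)"
proof -
  let ?m = "card (UNIV :: 'm set)" and ?d = "card (fixedpts r s (Dgrp q))"
    and ?\<rho> = "card (fixedpts r s (Rgrp q))" and ?\<sigma> = "card (fixedpts r s Sgrp)"
    and ?h0 = "tate0 r s (Dgrp q)" and ?h1 = "tate_m1 r s (Dgrp q)"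
    and ?n = "card (range (normmap r s (Dgrp q)))" and ?J = "card (augment r s (Dgrp q))"
  have "?h1 * (?m * ?d\<^sup>2) * (?n * ?J)
      = ?m * ?d\<^sup>2 * (?n * card {x. normmap r s (Dgrp q) x = 0})"
    by (simp add: tate_m1_Dgrp_mult[symmetric] ac_simps)
  also have "\<dots> = ?d\<^sup>2 * (card I_s * ?\<sigma>) * (card I_rs * ?\<sigma>)"
    by (simp add: card_range_mult_card_kernel[OF additive_norm_D] card_I_s card_I_rs fixedpts_Sgrp)
  also have "\<dots> = ?d * ?\<sigma>\<^sup>2 * (?J * (card (I_s \<inter> I_rs) * ?d))"
    by (simp add: card_augment_Dgrp[symmetric] power2_eq_square ac_simps)
  also have "\<dots> = ?d * ?\<sigma>\<^sup>2 * (?J * ?\<rho>)"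
    by (simp only: card_I_s_Int_I_rs fixedpts_Rgrp)
  also have "\<dots> = ?h0 * (?\<rho> * ?\<sigma>\<^sup>2) * (?n * ?J)"
    by (simp only: tate0_Dgrp_mult[symmetric]) (simp add: ac_simps)
  finally show ?thesis
    using add_subgroup_zero[OF add_subgroup_augment, of r s "Dgrp q"] by auto
qed

lemma dinv_Dgrp: "g \<in> Dgrp q \<Longrightarrow> dinv q g \<in> Dgrp q"
  using q_gt_1 by (auto simp: Dgrp_def dinv_def)

lemma dinv_dinv: "g \<in> Dgrp q \<Longrightarrow> dinv q (dinv q g) = g"
  by (auto simp: Dgrp_def dinv_def less_2_cases_iff mod_if)

lemma dual_act_invariant_iff:
  assumes "\<psi> \<in> dual_carrier"
  shows "(\<forall>g\<in>Dgrp q. dual_act q r s g \<psi> = \<psi>)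
    \<longleftrightarrow> \<psi> \<in> annihilator (augment r s (Dgrp q))"
proof
  interpret \<psi>: additive \<psi> by (rule additive_dual_carrier[OF assms])
  assume invariant: "\<forall>g\<in>Dgrp q. dual_act q r s g \<psi> = \<psi>"
  have "\<psi> (dact r s g x) = \<psi> x" if "g \<in> Dgrp q" for g x
    using fun_cong[OF bspec[OF invariant dinv_Dgrp[OF that]], of x]
    by (simp add: dual_act_def dinv_dinv that)
  then have "{dact r s g x - x | g x. g \<in> Dgrp q} \<subseteq> {x. \<psi> x = 0}"
    by (auto simp: \<psi>.diff)
  then have "augment r s (Dgrp q) \<subseteq> {x. \<psi> x = 0}"
    unfolding augment_def using \<psi>.add_subgroup_kernel[OF add_subgroup_UNIV]
    by (intro gen_subgroup_least) auto
  then show "\<psi> \<in> annihilator (augment r s (Dgrp q))"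
    using assms by (auto simp: annihilator_def)
next
  interpret \<psi>: additive \<psi> by (rule additive_dual_carrier[OF assms])
  assume "\<psi> \<in> annihilator (augment r s (Dgrp q))"
  moreover have "dact r s (dinv q g) x - x \<in> augment r s (Dgrp q)" if "g \<in> Dgrp q" for g x
    unfolding augment_def using dinv_Dgrp[OF that] by (intro gen_subgroup.gen) blast
  ultimately have "\<psi> (dact r s (dinv q g) x - x) = 0" if "g \<in> Dgrp q" for g x
    using that by (auto simp: annihilator_def)
  then show "\<forall>g\<in>Dgrp q. dual_act q r s g \<psi> = \<psi>"
    by (auto simp: dual_act_def \<psi>.diff)
qed

lemma card_fixedpts_Dgrp_self_dual:
  assumes "iso_to_dual q r s"
  shows "card (fixedpts r s (Dgrp q)) * card (augment r s (Dgrp q)) = card (UNIV :: 'm set)"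
proof -
  obtain f :: "'m \<Rightarrow> 'm \<Rightarrow> qz" where bij: "bij_betw f UNIV dual_carrier"
    and equivariant: "\<forall>g\<in>Dgrp q. \<forall>x. f (dact r s g x) = dual_act q r s g (f x)"
    using assms unfolding iso_to_dual_def by blast
  have "x \<in> fixedpts r s (Dgrp q) \<longleftrightarrow> f x \<in> annihilator (augment r s (Dgrp q))" for x
  proof -
    have "x \<in> fixedpts r s (Dgrp q) \<longleftrightarrow> (\<forall>g\<in>Dgrp q. f (dact r s g x) = f x)"
      using bij_betw_imp_inj_on[OF bij] by (auto simp: fixedpts_def inj_eq)
    also have "\<dots> \<longleftrightarrow> f x \<in> annihilator (augment r s (Dgrp q))"
      using equivariant dual_act_invariant_iff[OF bij_betwE[OF bij, rule_format, OF UNIV_I]]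
      by simp
    finally show ?thesis .
  qed
  moreover have "annihilator (augment r s (Dgrp q)) \<subseteq> range f"
    using bij by (auto simp: bij_betw_def annihilator_def)
  ultimately have "f ` fixedpts r s (Dgrp q) = annihilator (augment r s (Dgrp q))"
    by blast
  then have "card (fixedpts r s (Dgrp q)) = card (annihilator (augment r s (Dgrp q)))"
    using bij by (metis bij_betw_imp_inj_on card_image inj_on_subset subset_UNIV)
  moreover have "card (dual_carrier :: ('m \<Rightarrow> qz) set) = card (UNIV :: 'm set)"
    using bij_betw_same_card[OF bij] by simp
  ultimately show ?thesis
    using card_annihilator_mult_card[OF _ add_subgroup_augment] by simp
qed

lemma tate_Dgrp_self_dual:
  assumes "iso_to_dual q r s"
  shows "tate0 r s (Dgrp q) = tate_m1 r s (Dgrp q)"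
proof -
  let ?n = "card (range (normmap r s (Dgrp q)))" and ?J = "card (augment r s (Dgrp q))"
  have "tate0 r s (Dgrp q) * (?n * ?J) = card (fixedpts r s (Dgrp q)) * ?J"
    by (simp flip: tate0_Dgrp_mult add: ac_simps)
  also have "\<dots> = ?n * card {x. normmap r s (Dgrp q) x = 0}"
    by (simp add: card_fixedpts_Dgrp_self_dual[OF assms]
        card_range_mult_card_kernel[OF additive_norm_D])
  also have "\<dots> = tate_m1 r s (Dgrp q) * (?n * ?J)"
    by (simp flip: tate_m1_Dgrp_mult add: ac_simps)
  finally show ?thesis
    using add_subgroup_zero[OF add_subgroup_augment, of r s "Dgrp q"] by auto
qed

end

theorem mainTheorem7:
  fixes q :: nat and r s :: "'m::{ab_group_add, finite} \<Rightarrow> 'm"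
  assumes "odd q" and "q > 1"
    and "is_D_module q r s"
  shows "real (card (UNIV :: 'm set)) * real (card (fixedpts r s (Dgrp q))) ^ 2 /
           (real (card (fixedpts r s (Rgrp q))) * real (card (fixedpts r s Sgrp)) ^ 2)
         = real (tate0 r s (Dgrp q)) / real (tate_m1 r s (Dgrp q))
     \<and> reg_const_finite q r s = (real (tate_m1 r s (Dgrp q)) / real (tate0 r s (Dgrp q))) ^ 2
     \<and> reg_const_finite q r s
         = theta_prod q (\<lambda>H. real (tate_m1 r s H)) / theta_prod q (\<lambda>H. real (tate0 r s H))
     \<and> (iso_to_dual q r s \<longrightarrow>
         real (card (UNIV :: 'm set)) * real (card (fixedpts r s (Dgrp q))) ^ 2 /
           (real (card (fixedpts r s (Rgrp q))) * real (card (fixedpts r s Sgrp)) ^ 2) = 1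
         \<and> reg_const_finite q r s = 1)"
proof -
  interpret dihedral_module q r s using assms by unfold_locales
  let ?c = "\<lambda>H. real (card (fixedpts r s H))"
    and ?h0 = "real (tate0 r s (Dgrp q))" and ?h1 = "real (tate_m1 r s (Dgrp q))"
  have pos: "0 < ?c H" "0 < real (tate0 r s H)" "0 < real (tate_m1 r s H)" for H
    using card_add_subgroup_pos[OF _ add_subgroup_fixedpts[OF additive_r additive_s]]
      tate0_pos[OF additive_r additive_s] tate_m1_pos[OF additive_r additive_s] by auto
  have nonempty: "fixedpts r s H \<noteq> {}" for H
    using add_subgroup_zero[OF add_subgroup_fixedpts[OF additive_r additive_s]] by blast
  have theta_c: "theta_prod q ?c = ?h0 / ?h1"
    using arg_cong[OF tate_Dgrp_identity, of real] pos nonempty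
    by (simp add: theta_prod_def fixedpts_Triv field_simps)
  have reg: "reg_const_finite q r s = (?h1 / ?h0)\<^sup>2"
    unfolding reg_const_finite_def theta_prod_inverse_square theta_c by simp
  moreover have "theta_prod q (\<lambda>H. real (tate_m1 r s H)) / theta_prod q (\<lambda>H. real (tate0 r s H))
      = (?h1 / ?h0)\<^sup>2"
    using pos by (intro theta_prod_ratio) (simp_all add: tate_Triv tate_Rgrp tate_Sgrp)
  moreover have "iso_to_dual q r s \<Longrightarrow> ?h0 = ?h1"
    by (simp add: tate_Dgrp_self_dual)
  ultimately show ?thesis
    using theta_c pos(2,3)[of "Dgrp q"] by (auto simp: theta_prod_def fixedpts_Triv)
qed

end
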